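(* There exists $c\in\mathbb{N}$ such that for all $l\in\mathbb{N}$ and all $x,y\in\{0,1\}^*$, $$\mathrm{FS}^{l+c}(xy)\leq 2|x|+\mathrm{FS}^{l}(y)+2.$$
   Context: A finite-state transducer (FST) is a 4-tuple $T=(Q,\delta,\nu,q_0)$ with $Q$ a nonempty finite set of states, $\delta:Q\times\{0,1\}\to Q$ the transition function, $\nu:Q\times\{0,1\}\to\{0,1\}^*$ the output function, and $q_0\in Q$ the initial state; every state is assumed reachable from $q_0$. The extended transition function is $\widehat\delta(\lambda)=q_0$, $\widehat\delta(xa)=\delta(\widehat\delta(x),a)$, and the output of $T$ on $x$ is defined by $T(\lambda)=\lambda$, $T(xa)=T(x)\nu(\widehat\delta(x),a)$. Fix a standard binary representation $\sigma_T$ of each FST $T$ and let $|T|=|\sigma_T|$; let $\mathrm{FST}^{\leq k}=\{T\in\mathrm{FST}: |T|\le k\}$. For $k\in\mathbb{N}$ and $x\in\{0,1\}^*$, $\mathrm{FS}^k(x)=\min\{|p| : p\in\{0,1\}^*,\ \exists T\in\mathrm{FST}^{\leq k},\ T(p)=x\}$. Here $xy$ denotes concatenation. *)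

theory Defs
  imports Main "HOL-Library.Extended_Nat"
begin

text \<open>Binary strings are bool lists (False = 0, True = 1).

A finite-state transducer is represented concretely by a nonempty list of
state entries: the states are 0, ..., n-1 (n = length of the list), the
initial state is 0, and entry q = (d0, w0, d1, w1) gives
delta(q,0) = q + d0, nu(q,0) = w0, delta(q,1) = q + d1, nu(q,1) = w1
(transition targets are stored as signed offsets relative to the source state).\<close>

type_synonym fst_entry = "int \<times> bool list \<times> int \<times> bool list"
type_synonym fst = "fst_entry list"

definition fst_delta :: "fst \<Rightarrow> nat \<Rightarrow> bool \<Rightarrow> nat" where
  "fst_delta T q a =
     (case T ! q of (d0, w0, d1, w1) \<Rightarrow> nat (int q + (if a then d1 else d0)))"

definition fst_nu :: "fst \<Rightarrow> nat \<Rightarrow> bool \<Rightarrow> bool list" where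
  "fst_nu T q a = (case T ! q of (d0, w0, d1, w1) \<Rightarrow> (if a then w1 else w0))"

fun fst_deltahat_rev :: "fst \<Rightarrow> bool list \<Rightarrow> nat" where
  "fst_deltahat_rev T [] = 0"
| "fst_deltahat_rev T (a # xs) = fst_delta T (fst_deltahat_rev T xs) a"

definition fst_deltahat :: "fst \<Rightarrow> bool list \<Rightarrow> nat" where
  "fst_deltahat T x = fst_deltahat_rev T (rev x)"

fun fst_out_rev :: "fst \<Rightarrow> bool list \<Rightarrow> bool list" where
  "fst_out_rev T [] = []"
| "fst_out_rev T (a # xs) = fst_out_rev T xs @ fst_nu T (fst_deltahat_rev T xs) a"

definition fst_out :: "fst \<Rightarrow> bool list \<Rightarrow> bool list" where
  "fst_out T x = fst_out_rev T (rev x)"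

definition wf_fst :: "fst \<Rightarrow> bool" where
  "wf_fst T \<longleftrightarrow> T \<noteq> [] \<and>
     (\<forall>q < length T. \<forall>a. 0 \<le> int q + (case T ! q of (d0, w0, d1, w1) \<Rightarrow> if a then d1 else d0)
                          \<and> int q + (case T ! q of (d0, w0, d1, w1) \<Rightarrow> if a then d1 else d0) < int (length T)) \<and>
     (\<forall>q < length T. \<exists>x. fst_deltahat T x = q)"

fun bin_nat :: "nat \<Rightarrow> bool list" where
  "bin_nat n = (if n = 0 then [] else bin_nat (n div 2) @ [odd n])"

definition enc_bits :: "bool list \<Rightarrow> bool list" where
  "enc_bits w = concat (map (\<lambda>b. [True, b]) w) @ [False]"

definition enc_int :: "int \<Rightarrow> bool list" where
  "enc_int i = (i < 0) # enc_bits (bin_nat (nat \<bar>i\<bar>))"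

definition enc_entry :: "fst_entry \<Rightarrow> bool list" where
  "enc_entry e = (case e of (d0, w0, d1, w1) \<Rightarrow> enc_int d0 @ enc_bits w0 @ enc_int d1 @ enc_bits w1)"

definition fst_code :: "fst \<Rightarrow> bool list" where
  "fst_code T = concat (map enc_entry T)"

definition fst_size :: "fst \<Rightarrow> nat" where
  "fst_size T = length (fst_code T)"

text \<open>FS^k(x); the minimum over the empty set is \<infinity>.\<close>
definition FS :: "nat \<Rightarrow> bool list \<Rightarrow> enat" where
  "FS k x = (INF p \<in> {p. \<exists>T. wf_fst T \<and> fst_size T \<le> k \<and> fst_out T p = x}. enat (length p))"

end

theory Submission
  imports Defs
begin

text \<open>Put in front of a transducer \<open>T\<close> a two-state block that reads \<open>enc_bits x\<close>
(each bit \<open>b\<close> of \<open>x\<close> written as \<open>1b\<close>, terminated by \<open>0\<close>), printing \<open>x\<close>, and on the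
terminating \<open>0\<close> passes control to the initial state of \<open>T\<close>. Transition targets are
stored as offsets relative to the source state, so the entries of \<open>T\<close> can be appended
unchanged: the composite costs only a constant more than \<open>T\<close> and maps \<open>enc_bits x @ p\<close>,
of length \<open>2|x| + 1 + |p|\<close>, to \<open>xy\<close> whenever \<open>T\<close> maps \<open>p\<close> to \<open>y\<close>.\<close>

definition fst_offset :: "fst \<Rightarrow> nat \<Rightarrow> bool \<Rightarrow> int" where
  "fst_offset T q a = (case T ! q of (d0, w0, d1, w1) \<Rightarrow> if a then d1 else d0)"

lemma fst_delta_offset: "fst_delta T q a = nat (int q + fst_offset T q a)"
  by (simp add: fst_delta_def fst_offset_def split: prod.split)

lemma wf_fst_iff:
  "wf_fst T \<longleftrightarrow> T \<noteq> [] \<and>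
     (\<forall>q < length T. \<forall>a. 0 \<le> int q + fst_offset T q a \<and> int q + fst_offset T q a < int (length T)) \<and>
     (\<forall>q < length T. \<exists>x. fst_deltahat T x = q)"
  by (simp add: wf_fst_def fst_offset_def)

lemma wf_fst_delta_less:
  assumes "wf_fst T" "q < length T"
  shows "fst_delta T q a < length T"
proof -
  have "0 \<le> int q + fst_offset T q a" "int q + fst_offset T q a < int (length T)"
    using assms by (simp_all add: wf_fst_iff)
  then show ?thesis by (simp add: fst_delta_offset nat_less_iff)
qed

fun fst_run_out :: "fst \<Rightarrow> nat \<Rightarrow> bool list \<Rightarrow> bool list" where
  "fst_run_out T q [] = []"
| "fst_run_out T q (a # w) = fst_nu T q a @ fst_run_out T (fst_delta T q a) w"

fun fst_run_state :: "fst \<Rightarrow> nat \<Rightarrow> bool list \<Rightarrow> nat" where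
  "fst_run_state T q [] = q"
| "fst_run_state T q (a # w) = fst_run_state T (fst_delta T q a) w"

lemma fst_deltahat_snoc: "fst_deltahat T (x @ [a]) = fst_delta T (fst_deltahat T x) a"
  by (simp add: fst_deltahat_def)

lemma fst_out_snoc: "fst_out T (x @ [a]) = fst_out T x @ fst_nu T (fst_deltahat T x) a"
  by (simp add: fst_out_def fst_deltahat_def)

lemma fst_deltahat_append: "fst_deltahat T (x @ y) = fst_run_state T (fst_deltahat T x) y"
proof (induction y arbitrary: x)
  case (Cons a y)
  show ?case using Cons.IH[of "x @ [a]"] by (simp add: fst_deltahat_snoc)
qed simp

lemma fst_out_append: "fst_out T (x @ y) = fst_out T x @ fst_run_out T (fst_deltahat T x) y"
proof (induction y arbitrary: x)
  case (Cons a y)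
  show ?case using Cons.IH[of "x @ [a]"] by (simp add: fst_out_snoc fst_deltahat_snoc)
qed simp

lemma fst_deltahat_eq_run_state: "fst_deltahat T p = fst_run_state T 0 p"
  using fst_deltahat_append[of T "[]" p] by (simp add: fst_deltahat_def)

lemma fst_out_eq_run_out: "fst_out T p = fst_run_out T 0 p"
  using fst_out_append[of T "[]" p] by (simp add: fst_out_def fst_deltahat_def)

lemma fst_offset_append_shift: "fst_offset (P @ T) (length P + q) a = fst_offset T q a"
  by (simp add: fst_offset_def)

lemma fst_delta_append_shift:
  assumes "wf_fst T" "q < length T"
  shows "fst_delta (P @ T) (length P + q) a = length P + fst_delta T q a"
proof -
  have "0 \<le> int q + fst_offset T q a" using assms by (simp add: wf_fst_iff)
  then show ?thesis by (simp add: fst_delta_offset fst_offset_append_shift)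
qed

lemma fst_nu_append_shift: "fst_nu (P @ T) (length P + q) a = fst_nu T q a"
  by (simp add: fst_nu_def)

lemma fst_run_state_append_shift:
  assumes "wf_fst T" "q < length T"
  shows "fst_run_state (P @ T) (length P + q) w = length P + fst_run_state T q w"
  using assms(2)
proof (induction w arbitrary: q)
  case (Cons a w)
  show ?case using Cons.IH[OF wf_fst_delta_less[OF assms(1) Cons.prems]]
    by (simp add: fst_delta_append_shift[OF assms(1) Cons.prems])
qed simp

lemma fst_run_out_append_shift:
  assumes "wf_fst T" "q < length T"
  shows "fst_run_out (P @ T) (length P + q) w = fst_run_out T q w"
  using assms(2)
proof (induction w arbitrary: q)
  case (Cons a w)
  show ?case using Cons.IH[OF wf_fst_delta_less[OF assms(1) Cons.prems]]
    by (simp add: fst_delta_append_shift[OF assms(1) Cons.prems] fst_nu_append_shift)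
qed simp

lemma fst_size_append: "fst_size (P @ T) = fst_size P + fst_size T"
  by (simp add: fst_size_def fst_code_def)

definition copy_prefix :: fst where
  "copy_prefix = [(2, [], 1, []), (-1, [False], -1, [True])]"

lemma length_copy_prefix: "length copy_prefix = 2"
  by (simp add: copy_prefix_def)

lemma copy_prefix_run:
  "fst_run_out (copy_prefix @ T) 0 (enc_bits x @ p) = x @ fst_run_out (copy_prefix @ T) 2 p \<and>
   fst_run_state (copy_prefix @ T) 0 (enc_bits x @ p) = fst_run_state (copy_prefix @ T) 2 p"
proof (induction x)
  case Nil
  show ?case by (simp add: enc_bits_def copy_prefix_def fst_delta_def fst_nu_def)
next
  case (Cons b x)
  have "fst_delta (copy_prefix @ T) 0 True = 1" "fst_nu (copy_prefix @ T) 0 True = []"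
    "fst_delta (copy_prefix @ T) 1 b = 0" "fst_nu (copy_prefix @ T) 1 b = [b]"
    by (simp_all add: copy_prefix_def fst_delta_def fst_nu_def)
  then show ?case using Cons.IH by (simp add: enc_bits_def)
qed

lemma fst_out_copy_prefix:
  assumes "wf_fst T"
  shows "fst_out (copy_prefix @ T) (enc_bits x @ p) = x @ fst_out T p"
proof -
  have "0 < length T" using assms by (simp add: wf_fst_iff)
  then show ?thesis
    using copy_prefix_run fst_run_out_append_shift[OF assms, of 0 copy_prefix p]
    by (simp add: fst_out_eq_run_out length_copy_prefix)
qed

lemma fst_deltahat_copy_prefix:
  assumes "wf_fst T"
  shows "fst_deltahat (copy_prefix @ T) (enc_bits x @ p) = 2 + fst_deltahat T p"
proof -
  have "0 < length T" using assms by (simp add: wf_fst_iff)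
  then show ?thesis
    using copy_prefix_run fst_run_state_append_shift[OF assms, of 0 copy_prefix p]
    by (simp add: fst_deltahat_eq_run_state length_copy_prefix)
qed

lemma wf_fst_copy_prefix:
  assumes T: "wf_fst T"
  shows "wf_fst (copy_prefix @ T)"
proof -
  have "T \<noteq> []" using T by (simp add: wf_fst_iff)
  have state_cases: "q < 2 \<or> (\<exists>r < length T. q = 2 + r)" if "q < length (copy_prefix @ T)" for q
    using that by (simp add: length_copy_prefix) presburger
  have targets:
    "\<forall>q < length (copy_prefix @ T). \<forall>a. 0 \<le> int q + fst_offset (copy_prefix @ T) q a \<and>
       int q + fst_offset (copy_prefix @ T) q a < int (length (copy_prefix @ T))"
  proof (intro allI impI)
    fix q a assume "q < length (copy_prefix @ T)"
    from state_cases[OF this]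
    show "0 \<le> int q + fst_offset (copy_prefix @ T) q a \<and>
       int q + fst_offset (copy_prefix @ T) q a < int (length (copy_prefix @ T))"
    proof (elim disjE exE conjE)
      assume "q < 2"
      then have "q = 0 \<or> q = 1" by auto
      then show ?thesis using \<open>T \<noteq> []\<close> by (auto simp: copy_prefix_def fst_offset_def)
    next
      fix r assume "r < length T" "q = 2 + r"
      moreover from this(1) have "0 \<le> int r + fst_offset T r a" "int r + fst_offset T r a < int (length T)"
        using T by (simp_all add: wf_fst_iff)
      ultimately show ?thesis
        using fst_offset_append_shift[of copy_prefix T r a] by (simp add: length_copy_prefix)
    qed
  qed
  have reachable: "\<forall>q < length (copy_prefix @ T). \<exists>w. fst_deltahat (copy_prefix @ T) w = q"
  proof (intro allI impI)
    fix q assume "q < length (copy_prefix @ T)"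
    from state_cases[OF this] show "\<exists>w. fst_deltahat (copy_prefix @ T) w = q"
    proof (elim disjE exE conjE)
      assume "q < 2"
      then have "q = 0 \<or> q = 1" by auto
      moreover have "fst_deltahat (copy_prefix @ T) [] = 0" "fst_deltahat (copy_prefix @ T) [True] = 1"
        by (simp_all add: fst_deltahat_def fst_delta_def copy_prefix_def)
      ultimately show ?thesis by blast
    next
      fix r assume "r < length T" "q = 2 + r"
      moreover obtain z where "fst_deltahat T z = r" using T \<open>r < length T\<close> unfolding wf_fst_iff by blast
      ultimately show ?thesis using fst_deltahat_copy_prefix[OF T, of "[]" z] by blast
    qed
  qed
  have "copy_prefix @ T \<noteq> []" by (simp add: copy_prefix_def)
  with targets reachable show ?thesis unfolding wf_fst_iff by - (intro conjI; assumption)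
qed

lemma FS_le:
  assumes "wf_fst T" "fst_size T \<le> k" "fst_out T p = x"
  shows "FS k x \<le> enat (length p)"
proof -
  have "p \<in> {p. \<exists>T. wf_fst T \<and> fst_size T \<le> k \<and> fst_out T p = x}" using assms by blast
  then show ?thesis unfolding FS_def by (rule INF_lower)
qed

lemma FS_witness:
  assumes "FS k x \<noteq> \<infinity>"
  obtains p T where "wf_fst T" "fst_size T \<le> k" "fst_out T p = x" "FS k x = enat (length p)"
proof -
  let ?S = "{p. \<exists>T. wf_fst T \<and> fst_size T \<le> k \<and> fst_out T p = x}"
  have "?S \<noteq> {}"
  proof
    assume "?S = {}"
    then have "FS k x = \<infinity>" unfolding FS_def by (simp only: image_empty Inf_empty top_enat_def)
    with assms show False by contradiction
  qed
  then obtain p0 where "p0 \<in> ?S" by blast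
  then have "FS k x \<in> (\<lambda>p. enat (length p)) ` ?S"
    unfolding FS_def by (intro wellorder_InfI) blast
  then obtain p where "p \<in> ?S" and "FS k x = enat (length p)" by (rule imageE)
  then show ?thesis using that by blast
qed

lemma FS_append_le:
  "FS (l + fst_size copy_prefix) (x @ y) \<le> enat (2 * length x + 1) + FS l y"
proof (cases "FS l y = \<infinity>")
  case False
  then obtain p T where T: "wf_fst T" "fst_size T \<le> l" "fst_out T p = y"
    and FS_y: "FS l y = enat (length p)"
    by (rule FS_witness)
  have "FS (l + fst_size copy_prefix) (x @ y) \<le> enat (length (enc_bits x @ p))"
    using T fst_out_copy_prefix[OF T(1), of x p]
    by (intro FS_le[OF wf_fst_copy_prefix]) (simp_all add: fst_size_append)
  also have "length (enc_bits x @ p) = 2 * length x + 1 + length p"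
    by (induction x) (simp_all add: enc_bits_def)
  finally show ?thesis by (simp add: FS_y)
qed simp

theorem lemma4:
  "\<exists>c::nat. \<forall>(l::nat) (x::bool list) (y::bool list).
     FS (l + c) (x @ y) \<le> enat (2 * length x) + FS l y + 2"
proof (intro exI allI)
  fix l x y
  have "FS (l + fst_size copy_prefix) (x @ y) \<le> enat (2 * length x + 1) + FS l y"
    by (rule FS_append_le)
  also have "\<dots> \<le> enat (2 * length x) + FS l y + 2"
    by (cases "FS l y") (simp_all add: numeral_eq_enat)
  finally show "FS (l + fst_size copy_prefix) (x @ y) \<le> enat (2 * length x) + FS l y + 2" .
qed

end
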